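(* (i) If $b\neq0$, then for all $0\le k\le n$, $$E_{n,k}(a,b;c_0,c_\infty)=\frac1{b^kk!}\sum_{j=0}^k(-1)^{k-j}\binom kj(bn+c_0+c_\infty)^{\underline{k-j},b}\,(c_0+c_\infty)^{\overline j,b}\,(bj+c_0)^{\underline n,a}.$$ (ii) For all complex $a,b,c_0,c_\infty$ and all $n\ge0$, as polynomials in $x$, $$(c_0+c_\infty)^{\overline n,b}\,(x)^{\underline n,a}=\sum_{k=0}^nE_{n,k}(a,b;c_0,c_\infty)\,(x-c_0)^{\underline k,b}\,(x+c_\infty)^{\overline{n-k},b}.$$
   Context: GKP triangle $\left[\begin{array}{cc|c}\alpha,&\beta&\gamma\\ \alpha',&\beta'&\gamma'\end{array}\right]_{n,k}$: defined by $T_{0,0}=1$, $T_{n,k}=0$ if $n<0$, $k<0$ or $k>n$, and $T_{n+1,k+1}=[\alpha n+\beta(k+1)+\gamma]T_{n,k+1}+[\alpha' n+\beta' k+\gamma']T_{n,k}$ for $n\ge0$, $k\in\mathbb Z$. Generalized Eulerian numbers: $E_{n,k}(a,b;c_0,c_\infty):=\left[\begin{array}{cc|c}-a,&b&c_0\\ a+b,&-b&c_\infty\end{array}\right]_{n,k}$, i.e. $E_{n+1,k+1}=[-an+b(k+1)+c_0]E_{n,k+1}+[(a+b)n-bk+c_\infty]E_{n,k}$. $(x)^{\overline n,b}=\prod_{i=0}^{n-1}(x+ib)$, $(x)^{\underline n,b}=\prod_{i=0}^{n-1}(x-ib)$ (empty product $=1$). *)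

theory Defs
  imports "HOL-Analysis.Analysis" "HOL-Computational_Algebra.Polynomial"
begin

fun gkp :: "complex \<Rightarrow> complex \<Rightarrow> complex \<Rightarrow> complex \<Rightarrow> complex \<Rightarrow> complex
            \<Rightarrow> nat \<Rightarrow> int \<Rightarrow> complex" where
  "gkp al be ga al' be' ga' 0 k = (if k = 0 then 1 else 0)"
| "gkp al be ga al' be' ga' (Suc n) k =
     (if k < 0 \<or> k > int (Suc n) then 0 else
      (al * of_nat n + be * of_int k + ga) * gkp al be ga al' be' ga' n k
      + (al' * of_nat n + be' * of_int (k - 1) + ga') * gkp al be ga al' be' ga' n (k - 1))"

definition genEuler :: "complex \<Rightarrow> complex \<Rightarrow> complex \<Rightarrow> complex \<Rightarrow> nat \<Rightarrow> int \<Rightarrow> complex" where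
  "genEuler a b c0 cinf n k = gkp (-a) b c0 (a + b) (-b) cinf n k"

definition rise :: "complex \<Rightarrow> nat \<Rightarrow> complex \<Rightarrow> complex" where
  "rise x n b = (\<Prod>i<n. x + of_nat i * b)"

definition fall :: "complex \<Rightarrow> nat \<Rightarrow> complex \<Rightarrow> complex" where
  "fall x n b = (\<Prod>i<n. x - of_nat i * b)"

definition rise_poly :: "complex \<Rightarrow> nat \<Rightarrow> complex \<Rightarrow> complex poly" where
  "rise_poly c n b = (\<Prod>i<n. [: c + of_nat i * b, 1 :])"

definition fall_poly :: "complex \<Rightarrow> nat \<Rightarrow> complex \<Rightarrow> complex poly" where
  "fall_poly c n b = (\<Prod>i<n. [: c - of_nat i * b, 1 :])"

end

theory Submission
  imports Defs
begin

text \<open>Both parts go by induction on \<open>n\<close> along the triangle recurrence of \<open>E\<close>.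
  For (i), multiplied by \<open>b^k k!\<close> the sum satisfies the same recurrence as \<open>E\<close>, and in row
  \<open>n = 0\<close> it collapses, by the Vandermonde identity for rising factorials applied to
  \<open>c + (-c)\<close>, to the rising factorial of \<open>0\<close>, which vanishes for \<open>k > 0\<close>.
  For (ii), the new factor \<open>(c\<^sub>0 + c\<^sub>\<infinity> + nb)(x - na)\<close> is split, for each \<open>k\<close>, as a combination of
  \<open>x + c\<^sub>\<infinity> + (n - k)b\<close> and \<open>x - c\<^sub>0 - kb\<close>, which extend the rising resp. falling factor of
  the \<open>k\<close>-th term; the coefficients are exactly those of the recurrence of \<open>E\<close>.\<close>

lemma gkp_eq_0_outside: "k < 0 \<or> k > int n \<Longrightarrow> gkp al be ga al' be' ga' n k = 0"
  by (induction n arbitrary: k) auto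

lemma gkp_Suc:
  "gkp al be ga al' be' ga' (Suc n) k =
     (al * of_nat n + be * of_int k + ga) * gkp al be ga al' be' ga' n k
   + (al' * of_nat n + be' * of_int (k - 1) + ga') * gkp al be ga al' be' ga' n (k - 1)"
  using gkp_eq_0_outside[of k n] gkp_eq_0_outside[of "k - 1" n] by auto

lemma genEuler_Suc_0:
  "genEuler a b c0 cinf (Suc n) 0 = (c0 - a * of_nat n) * genEuler a b c0 cinf n 0"
  unfolding genEuler_def gkp_Suc using gkp_eq_0_outside[of "-1" n] by (simp add: algebra_simps)

lemma genEuler_Suc_Suc:
  "genEuler a b c0 cinf (Suc n) (int (Suc m)) =
     (c0 + b * (of_nat m + 1) - a * of_nat n) * genEuler a b c0 cinf n (int (Suc m))
   + (cinf + a * of_nat n + b * (of_nat n - of_nat m)) * genEuler a b c0 cinf n (int m)"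
  unfolding genEuler_def gkp_Suc by (simp add: algebra_simps)

lemma fall_Suc: "fall x (Suc m) b = fall x m b * (x - of_nat m * b)"
  by (simp add: fall_def)

lemma fall_Suc_shift: "fall x (Suc m) b = x * fall (x - b) m b"
  unfolding fall_def prod.lessThan_Suc_shift by (simp add: algebra_simps)

lemma rise_Suc: "rise x (Suc m) b = rise x m b * (x + of_nat m * b)"
  by (simp add: rise_def)

lemma fall_eq_neg_rise: "fall x m b = (-1) ^ m * rise (-x) m b"
proof -
  have "(-1) ^ m * rise (-x) m b = (\<Prod>i<m. (-1) * (- x + of_nat i * b))"
    unfolding rise_def by (simp only: prod.distrib prod_constant card_lessThan)
  then show ?thesis
    unfolding fall_def by simp
qed

lemma rise_eq_pochhammer:
  assumes "b \<noteq> 0"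
  shows "rise x k b = b ^ k * pochhammer (x / b) k"
proof -
  have "b ^ k * pochhammer (x / b) k = (\<Prod>i<k. b * (x / b + of_nat i))"
    by (simp add: pochhammer_prod atLeast0LessThan prod.distrib)
  also have "\<dots> = rise x k b"
    unfolding rise_def using assms by (intro prod.cong) (auto simp: field_simps)
  finally show ?thesis ..
qed

lemma rise_add:
  "rise (x + y) k b = (\<Sum>j\<le>k. of_nat (k choose j) * rise x j b * rise y (k - j) b)"
proof (cases "b = 0")
  case True
  then show ?thesis
    by (simp add: rise_def binomial_ring)
next
  case False
  have "rise (x + y) k b =
      (\<Sum>j\<le>k. of_nat (k choose j) * (b ^ j * pochhammer (x / b) j) * (b ^ (k - j) * pochhammer (y / b) (k - j)))"
    unfolding rise_eq_pochhammer[OF False] add_divide_distrib pochhammer_binomial_sum sum_distrib_left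
    by (intro sum.cong refl) (simp add: power_add[symmetric] mult_ac)
  then show ?thesis
    by (simp add: rise_eq_pochhammer[OF False])
qed

definition euler_sum :: "complex \<Rightarrow> complex \<Rightarrow> complex \<Rightarrow> complex \<Rightarrow> nat \<Rightarrow> nat \<Rightarrow> complex" where
  "euler_sum a b c0 cinf n k = (\<Sum>j\<le>k. (-1) ^ (k - j) * of_nat (k choose j)
                   * fall (b * of_nat n + c0 + cinf) (k - j) b
                   * rise (c0 + cinf) j b
                   * fall (b * of_nat j + c0) n a)"

lemma euler_sum_0_left: "euler_sum a b c0 cinf 0 k = rise 0 k b"
proof -
  have "euler_sum a b c0 cinf 0 k =
      (\<Sum>j\<le>k. of_nat (k choose j) * rise (c0 + cinf) j b * rise (- (c0 + cinf)) (k - j) b)"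
    unfolding euler_sum_def fall_eq_neg_rise[of "b * of_nat 0 + c0 + cinf"]
    by (intro sum.cong refl) (simp add: fall_def power_mult_distrib[symmetric] mult_ac)
  then show ?thesis
    using rise_add[of "c0 + cinf" "- (c0 + cinf)" k b] by simp
qed

lemma euler_sum_Suc_0:
  "euler_sum a b c0 cinf (Suc n) 0 = (c0 - a * of_nat n) * euler_sum a b c0 cinf n 0"
  unfolding euler_sum_def by (simp add: fall_Suc fall_def[of _ 0] rise_def algebra_simps)

lemma euler_sum_Suc_Suc:
  "euler_sum a b c0 cinf (Suc n) (Suc m) =
     (c0 + b * (of_nat m + 1) - a * of_nat n) * euler_sum a b c0 cinf n (Suc m)
   + (cinf + a * of_nat n + b * (of_nat n - of_nat m)) * (b * of_nat (Suc m)) * euler_sum a b c0 cinf n m"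
proof -
  define c where "c = c0 + b * (of_nat m + 1) - a * of_nat n"
  define d where "d = (cinf + a * of_nat n + b * (of_nat n - of_nat m)) * (b * of_nat (Suc m))"
  define X where "X = b * of_nat n + c0 + cinf"
  define t where "t n' k j = (-1) ^ (k - j) * of_nat (k choose j)
                   * fall (b * of_nat n' + c0 + cinf) (k - j) b
                   * rise (c0 + cinf) j b * fall (b * of_nat j + c0) n' a" for n' k j
  have sum_t: "euler_sum a b c0 cinf n' k = (\<Sum>j\<le>k. t n' k j)" for n' k
    unfolding euler_sum_def t_def ..
  have last: "t (Suc n) (Suc m) (Suc m) = c * t n (Suc m) (Suc m)"
    unfolding t_def c_def by (simp add: fall_Suc fall_def[of _ 0] algebra_simps)
  have inner: "t (Suc n) (Suc m) j = c * t n (Suc m) j + d * t n m j" if "j \<le> m" for j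
  proof -
    define K where "K = (-1) ^ (m - j) * of_nat (Suc m choose j)
        * fall X (m - j) b * rise (c0 + cinf) j b * fall (b * of_nat j + c0) n a"
    have sj: "Suc m - j = Suc (m - j)"
      using that by simp
    \<comment> \<open>puts all three terms over the common factor \<open>K\<close>\<close>
    have "Suc m * (m choose j) = (Suc m - j) * (Suc m choose j)"
      using binomial_absorb_comp[of "Suc m" j] by simp
    then have choose: "of_nat (Suc m) * of_nat (m choose j) = (of_nat (Suc m - j) :: complex) * of_nat (Suc m choose j)"
      by (simp only: of_nat_mult[symmetric])
    have shift: "fall (b * of_nat (Suc n) + c0 + cinf) (Suc (m - j)) b = (X + b) * fall X (m - j) b"
      unfolding fall_Suc_shift X_def by (simp add: algebra_simps)
    have t_Suc: "t (Suc n) (Suc m) j = - ((X + b) * (b * of_nat j + c0 - a * of_nat n)) * K"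
      unfolding t_def K_def sj shift unfolding fall_Suc by (simp add: algebra_simps)
    have t_same: "t n (Suc m) j = - (X - of_nat (m - j) * b) * K"
      unfolding t_def K_def sj fall_Suc by (simp add: X_def algebra_simps)
    have "of_nat (Suc m) * t n m j = of_nat (Suc m) * of_nat (m choose j)
        * ((-1) ^ (m - j) * fall X (m - j) b * rise (c0 + cinf) j b * fall (b * of_nat j + c0) n a)"
      unfolding t_def X_def by (simp only: mult_ac)
    also have "\<dots> = of_nat (Suc m - j) * K"
      unfolding choose K_def by (simp only: mult_ac)
    finally have t_pred: "of_nat (Suc m) * t n m j = of_nat (Suc m - j) * K" .
    have "d * t n m j = (cinf + a * of_nat n + b * (of_nat n - of_nat m)) * b * (of_nat (Suc m) * t n m j)"
      unfolding d_def by (simp only: mult_ac)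
    then show ?thesis
      using that unfolding t_Suc t_same t_pred c_def X_def by (simp add: of_nat_diff algebra_simps)
  qed
  have "euler_sum a b c0 cinf (Suc n) (Suc m) = (\<Sum>j\<le>m. c * t n (Suc m) j + d * t n m j) + c * t n (Suc m) (Suc m)"
    unfolding sum_t using inner last by simp
  also have "\<dots> = c * euler_sum a b c0 cinf n (Suc m) + d * euler_sum a b c0 cinf n m"
    unfolding sum_t by (simp add: sum.distrib sum_distrib_left algebra_simps)
  finally show ?thesis
    unfolding c_def d_def .
qed

text \<open>Division-free form of part (i); it holds for all \<open>b\<close> and all \<open>k\<close>, both sides vanishing
  for \<open>k > n\<close>.\<close>

lemma euler_sum_eq_genEuler:
  "euler_sum a b c0 cinf n k = b ^ k * of_nat (fact k) * genEuler a b c0 cinf n (int k)"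
proof (induction n arbitrary: k)
  case 0
  have "rise 0 k b = (if k = 0 then 1 else 0)"
    unfolding rise_def by (auto intro: prod_zero)
  then show ?case
    by (simp add: euler_sum_0_left genEuler_def)
next
  case (Suc n)
  show ?case
  proof (cases k)
    case 0
    then show ?thesis
      using Suc.IH[of 0] by (simp add: euler_sum_Suc_0 genEuler_Suc_0)
  next
    case (Suc m)
    show ?thesis
      unfolding \<open>k = Suc m\<close> euler_sum_Suc_Suc genEuler_Suc_Suc Suc.IH by (simp add: algebra_simps)
  qed
qed

lemma fall_poly_Suc: "fall_poly c (Suc k) b = fall_poly c k b * [: c - of_nat k * b, 1 :]"
  by (simp add: fall_poly_def)

lemma rise_poly_Suc: "rise_poly c (Suc k) b = rise_poly c k b * [: c + of_nat k * b, 1 :]"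
  by (simp add: rise_poly_def)

lemma genEuler_poly_expansion:
  "smult (rise (c0 + cinf) n b) (fall_poly 0 n a) =
     (\<Sum>k\<le>n. smult (genEuler a b c0 cinf n (int k)) (fall_poly (- c0) k b * rise_poly cinf (n - k) b))"
proof (induction n)
  case 0
  show ?case
    by (simp add: fall_poly_def rise_poly_def rise_def genEuler_def)
next
  case (Suc n)
  define E where "E k = genEuler a b c0 cinf n (int k)" for k
  define P where "P k = fall_poly (- c0) k b" for k
  define Q where "Q k = rise_poly cinf k b" for k
  define A where "A k = c0 + b * of_nat k - a * of_nat n" for k
  define B where "B k = cinf + a * of_nat n + b * (of_nat n - of_nat k)" for k
  define f where "f k = smult (A k * E k) (P k * Q (Suc n - k))" for k
  define g where "g k = smult (B k * E k) (P (Suc k) * Q (n - k))" for k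
  define L where "L = smult (c0 + cinf + of_nat n * b) [: - (of_nat n * a), 1 :]"
  have split_L: "smult (E k) (P k * Q (n - k)) * L = f k + g k" if "k \<le> n" for k
  proof -
    define X where "X = [: cinf + of_nat (n - k) * b, 1 :]"
    define Y where "Y = [: - c0 - of_nat k * b, 1 :]"
    have "L = smult (A k) X + smult (B k) Y"
      using that by (simp add: L_def A_def B_def X_def Y_def of_nat_diff algebra_simps)
    moreover have "P (Suc k) = P k * Y" "Q (Suc n - k) = Q (n - k) * X"
      using that by (simp_all add: P_def Q_def X_def Y_def fall_poly_Suc rise_poly_Suc Suc_diff_le)
    ultimately show ?thesis
      unfolding f_def g_def by (simp add: algebra_simps smult_add_right)
  qed
  have "smult (rise (c0 + cinf) (Suc n) b) (fall_poly 0 (Suc n) a)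
      = smult (rise (c0 + cinf) n b) (fall_poly 0 n a) * L"
  proof -
    define Z where "Z = [: - (of_nat n * a), 1 :]"
    have "fall_poly 0 (Suc n) a = fall_poly 0 n a * Z"
      by (simp add: fall_poly_Suc Z_def)
    then show ?thesis
      unfolding rise_Suc L_def Z_def[symmetric]
      by (simp add: mult_smult_left mult_smult_right smult_smult mult.commute)
  qed
  also have "\<dots> = (\<Sum>k\<le>n. f k + g k)"
    unfolding Suc.IH sum_distrib_right
    by (intro sum.cong refl) (simp add: split_L[symmetric] E_def P_def Q_def mult_smult_left)
  also have "\<dots> = f 0 + (\<Sum>k\<le>n. f (Suc k) + g k)"
  proof -
    have "E (Suc n) = 0"
      unfolding E_def genEuler_def by (simp add: gkp_eq_0_outside)
    then have "(\<Sum>k\<le>n. f k) = f 0 + (\<Sum>k\<le>n. f (Suc k))"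
      using sum.atMost_Suc_shift[of f n] by (simp add: f_def)
    then show ?thesis
      by (simp add: sum.distrib)
  qed
  also have "\<dots> = (\<Sum>k\<le>Suc n. smult (genEuler a b c0 cinf (Suc n) (int k))
                      (fall_poly (- c0) k b * rise_poly cinf (Suc n - k) b))"
    unfolding sum.atMost_Suc_shift genEuler_Suc_Suc
    by (simp add: f_def g_def E_def P_def Q_def A_def B_def smult_add_left genEuler_Suc_0 add.commute)
  finally show ?case .
qed

theorem mainTheorem10:
  fixes a b c0 cinf :: complex
  shows "(b \<noteq> 0 \<longrightarrow> (\<forall>n k. k \<le> n \<longrightarrow>
            genEuler a b c0 cinf n (int k) =
              (1 / (b ^ k * of_nat (fact k))) *
              (\<Sum>j\<le>k. (-1) ^ (k - j) * of_nat (k choose j)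
                   * fall (b * of_nat n + c0 + cinf) (k - j) b
                   * rise (c0 + cinf) j b
                   * fall (b * of_nat j + c0) n a)))
       \<and> (\<forall>n. smult (rise (c0 + cinf) n b) (fall_poly 0 n a) =
              (\<Sum>k\<le>n. smult (genEuler a b c0 cinf n (int k))
                         (fall_poly (- c0) k b * rise_poly cinf (n - k) b)))"
  unfolding euler_sum_def[symmetric]
proof (intro conjI impI allI)
  fix n k :: nat
  assume "b \<noteq> 0"
  then have "b ^ k * of_nat (fact k) \<noteq> 0"
    by simp
  then show "genEuler a b c0 cinf n (int k) = 1 / (b ^ k * of_nat (fact k)) * euler_sum a b c0 cinf n k"
    unfolding euler_sum_eq_genEuler by simp
qed (rule genEuler_poly_expansion)

end
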